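(* Fix positive integers $K$, $N$, $L$, a number $P_e\in[0,1]$ and a vector $\mathbf{a}\in\mathbb{C}^{KL}$. In the model described in the context, let $\delta\mathbf{a}_f=-\frac{1}{M}\hat{\mathbf{S}}^T\delta\mathbf{S}\,\mathbf{a}$. Then $E\{\delta\mathbf{a}_f\}\rightarrow 2P_e\mathbf{a}$ almost surely as $M\rightarrow\infty$.
   Context: Synchronous DS-CDMA model with $K$ users, spreading gain $N$, $L$ paths per user and $M$ symbol periods. The channel gains $\mathbf{a}=(a_{11},a_{12},\dots,a_{1L},a_{21},\dots,a_{KL})^T\in\mathbb{C}^{KL}$ are fixed (deterministic). For each user $k$, path $l$ and symbol period $t\in\{1,\dots,M\}$, the spreading code $\mathbf{s}_{kl}(t)\in\mathbb{R}^N$ has entries in $\{\pm1/\sqrt{N}\}$, which are i.i.d. uniform, and the codes are mutually independent across $(k,l,t)$. The transmitted symbols $b_k(t)\in\{\pm1\}$ are i.i.d. uniform; the fed-back decisions satisfy $\hat b_k(t)=b_k(t)$ with probability $1-P_e$ and $\hat b_k(t)=-b_k(t)$ with probability $P_e$, independently across $(k,t)$. Let $\mathbf{S}(m)=(\mathbf{s}_{11}(m),\dots,\mathbf{s}_{KL}(m))\in\mathbb{R}^{N\times KL}$, $\mathbf{B}(m)=\mathrm{diag}(b_1(m)\mathbf{I}_L,\dots,b_K(m)\mathbf{I}_L)$, $\hat{\mathbf{B}}(m)=\mathrm{diag}(\hat b_1(m)\mathbf{I}_L,\dots,\hat b_K(m)\mathbf{I}_L)$; let $\mathbf{S}$ (resp.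 $\hat{\mathbf{S}}$) be the $NM\times KL$ matrix obtained by stacking $\mathbf{S}(1)\mathbf{B}(1),\dots,\mathbf{S}(M)\mathbf{B}(M)$ (resp. $\mathbf{S}(1)\hat{\mathbf{B}}(1),\dots,\mathbf{S}(M)\hat{\mathbf{B}}(M)$) vertically, and $\delta\mathbf{S}=\mathbf{S}-\hat{\mathbf{S}}$. The expectation $E\{\cdot\}$ is taken over the symbols and decisions, conditionally on the spreading codes; "almost surely" refers to the randomness of the spreading codes. *)

theory Defs
  imports "HOL-Probability.Probability"
begin

text \<open>Indices are 0-based: users k < K, paths l < L, symbol periods t < M, chips i < N.
  A realisation of all spreading codes is a function
  s :: nat \<times> nat \<times> nat \<times> nat \<Rightarrow> real, where s (k,l,t,i) is the i-th entry of s_kl(t).\<close>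

definition code_space :: "nat \<Rightarrow> (nat \<times> nat \<times> nat \<times> nat \<Rightarrow> real) measure" where
  "code_space N = PiM UNIV (\<lambda>_. measure_pmf (pmf_of_set {- 1 / sqrt (real N), 1 / sqrt (real N)}))"

definition sym_dec_pmf :: "real \<Rightarrow> (real \<times> real) pmf" where
  "sym_dec_pmf Pe = do {
      b \<leftarrow> pmf_of_set {- 1, 1 :: real};
      err \<leftarrow> bernoulli_pmf Pe;
      return_pmf (b, if err then - b else b) }"

text \<open>Joint law of all symbols and decisions over users k < K and periods t < M,
  independent across (k,t). bb (k,t) = (b_k(t), hat b_k(t)).\<close>
definition sym_space :: "nat \<Rightarrow> nat \<Rightarrow> real \<Rightarrow> (nat \<times> nat \<Rightarrow> real \<times> real) pmf" where
  "sym_space K M Pe = Pi_pmf {(k, t). k < K \<and> t < M} (1, 1) (\<lambda>_. sym_dec_pmf Pe)"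

text \<open>Entries of the stacked matrices S, hat S (row (t,i), column (k,l)).\<close>
definition S_stk :: "(nat \<times> nat \<times> nat \<times> nat \<Rightarrow> real) \<Rightarrow> (nat \<times> nat \<Rightarrow> real \<times> real)
    \<Rightarrow> nat \<times> nat \<Rightarrow> nat \<times> nat \<Rightarrow> real" where
  "S_stk s bb = (\<lambda>(t, i) (k, l). s (k, l, t, i) * fst (bb (k, t)))"

definition Shat_stk :: "(nat \<times> nat \<times> nat \<times> nat \<Rightarrow> real) \<Rightarrow> (nat \<times> nat \<Rightarrow> real \<times> real)
    \<Rightarrow> nat \<times> nat \<Rightarrow> nat \<times> nat \<Rightarrow> real" where
  "Shat_stk s bb = (\<lambda>(t, i) (k, l). s (k, l, t, i) * snd (bb (k, t)))"

definition delta_af :: "nat \<Rightarrow> nat \<Rightarrow> nat \<Rightarrow> nat \<Rightarrow> (nat \<times> nat \<times> nat \<times> nat \<Rightarrow> real)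
    \<Rightarrow> (nat \<times> nat \<Rightarrow> real \<times> real) \<Rightarrow> (nat \<Rightarrow> nat \<Rightarrow> complex) \<Rightarrow> nat \<Rightarrow> nat \<Rightarrow> complex" where
  "delta_af K N L M s bb a k l =
     - (1 / of_nat M) *
       (\<Sum>r \<in> {..<M} \<times> {..<N}. \<Sum>c \<in> {..<K} \<times> {..<L}.
          of_real (Shat_stk s bb r (k, l) * (S_stk s bb r c - Shat_stk s bb r c)) * a (fst c) (snd c))"

end

theory Submission
  imports Defs
begin

(* Averaging first over symbols and decisions: hat b_k(t) (b_k'(t) - hat b_k'(t)) has mean -2 Pe
   for k' = k and, by independence across users, mean 0 otherwise.  Hence component (k,l) of
   E{delta a_f} is 2 Pe times the sum over l' of a_kl' weighted by the time average of the
   per-period correlations of the codes of paths l and l' of user k.  For l' = l every such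
   correlation is exactly 1.  For l' <> l the correlations are independent across periods,
   centred and bounded by 1, so by Hoeffding's inequality and Borel-Cantelli their time
   average tends to 0 almost surely. *)

section \<open>Averages of bounded independent variables\<close>

lemma (in prob_space) indep_var_of_indep_vars:
  assumes indep: "indep_vars M' X I" and "i \<in> I" "j \<in> I" "i \<noteq> j"
  shows "indep_var (M' i) (X i) (M' j) (X j)"
proof -
  have "indep_var (PiM {i} M') (\<lambda>\<omega>. restrict (\<lambda>i. X i \<omega>) {i})
      (PiM {j} M') (\<lambda>\<omega>. restrict (\<lambda>i. X i \<omega>) {j})"
    by (rule indep_var_restrict[OF indep]) (use assms in auto)
  then have "indep_var (M' i) ((\<lambda>f. f i) \<circ> (\<lambda>\<omega>. restrict (\<lambda>i. X i \<omega>) {i}))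
      (M' j) ((\<lambda>f. f j) \<circ> (\<lambda>\<omega>. restrict (\<lambda>i. X i \<omega>) {j}))"
    by (rule indep_var_compose) (auto intro!: measurable_component_singleton)
  then show ?thesis
    by (simp add: comp_def)
qed

lemma (in product_prob_space) indep_vars_PiM_components:
  "P.indep_vars M (\<lambda>i x. x i) I"
proof (cases "I = {}")
  case True
  then show ?thesis
    unfolding P.indep_vars_def P.indep_sets_def by simp
next
  case False
  have "distr (PiM I M) (PiM I M) (\<lambda>x. restrict x I) = PiM I M"
    by (subst distr_cong[where g = "\<lambda>x. x"]) (auto simp: space_PiM)
  also have "\<dots> = PiM I (\<lambda>i. distr (PiM I M) (M i) (\<lambda>x. x i))"
    by (intro PiM_cong refl) (simp add: PiM_component)
  finally show ?thesis
    by (subst P.indep_vars_iff_distr_eq_PiM'[OF False]) auto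
qed

lemma (in prob_space) AE_tendsto_zero_if_summable_prob:
  fixes Z :: "nat \<Rightarrow> 'a \<Rightarrow> real"
  assumes [measurable]: "\<And>n. Z n \<in> borel_measurable M"
    and summable: "\<And>e. 0 < e \<Longrightarrow> summable (\<lambda>n. prob {x \<in> space M. e \<le> \<bar>Z n x\<bar>})"
  shows "AE x in M. (\<lambda>n. Z n x) \<longlonglongrightarrow> 0"
proof -
  have "AE x in M. \<forall>m. eventually (\<lambda>n. \<bar>Z n x\<bar> < inverse (real (Suc m))) sequentially"
  proof (subst AE_all_countable, intro allI)
    fix m
    have "AE x in M. eventually
        (\<lambda>n. x \<in> space M - {x \<in> space M. inverse (real (Suc m)) \<le> \<bar>Z n x\<bar>}) sequentially"
      by (rule borel_cantelli_AE1) (auto intro: summable simp: less_top[symmetric])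
    then show "AE x in M. eventually (\<lambda>n. \<bar>Z n x\<bar> < inverse (real (Suc m))) sequentially"
      by (rule eventually_mono) (auto elim!: eventually_mono)
  qed
  then show ?thesis
  proof (rule eventually_mono)
    fix x assume small: "\<forall>m. eventually (\<lambda>n. \<bar>Z n x\<bar> < inverse (real (Suc m))) sequentially"
    show "(\<lambda>n. Z n x) \<longlonglongrightarrow> 0"
    proof (rule tendstoI)
      fix e :: real assume "0 < e"
      then obtain m where m: "inverse (real (Suc m)) < e"
        using reals_Archimedean by blast
      from small have "eventually (\<lambda>n. \<bar>Z n x\<bar> < inverse (real (Suc m))) sequentially"
        by blast
      then show "eventually (\<lambda>n. dist (Z n x) 0 < e) sequentially"
        by (rule eventually_mono) (use m in auto)
    qed
  qed
qed

lemma (in prob_space) AE_average_tendsto_zero_if_bounded_indep: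
  fixes Y :: "nat \<Rightarrow> 'a \<Rightarrow> real"
  assumes indep: "indep_vars (\<lambda>_. borel) Y UNIV"
    and bounded: "\<And>t. AE x in M. Y t x \<in> {-c..c}" and "0 < c"
    and centered: "\<And>t. expectation (Y t) = 0"
  shows "AE x in M. (\<lambda>n. (\<Sum>t<n. Y t x) / real n) \<longlonglongrightarrow> 0"
proof (rule AE_tendsto_zero_if_summable_prob)
  have [measurable]: "Y t \<in> borel_measurable M" for t
    using indep by (simp add: indep_vars_def)
  show "(\<lambda>x. (\<Sum>t<n. Y t x) / real n) \<in> borel_measurable M" for n
    by measurable
  fix e :: real assume "0 < e"
  define q where "q = exp (- (e\<^sup>2 / (2 * c\<^sup>2)))"
  have q: "0 < q" "q < 1"
    using \<open>0 < e\<close> \<open>0 < c\<close> by (auto simp: q_def)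
  have tail: "prob {x \<in> space M. e \<le> \<bar>(\<Sum>t<n. Y t x) / real n\<bar>} \<le> 2 * q ^ n" for n
  proof (cases "n = 0")
    case True
    then show ?thesis
      using \<open>0 < e\<close> by simp
  next
    case False
    interpret Hoeffding_ineq M "{..<n}" Y "\<lambda>_. -c" "\<lambda>_. c" 0
    proof unfold_locales
      show "indep_vars (\<lambda>_. borel) Y {..<n}"
        by (rule indep_vars_subset[OF indep]) simp
      show "AE x in M. Y t x \<in> {-c..c}" for t
        by (rule bounded)
      show "0 \<equiv> \<Sum>t<n. expectation (Y t)"
        by (simp add: centered)
    qed simp
    have "{x \<in> space M. e \<le> \<bar>(\<Sum>t<n. Y t x) / real n\<bar>} =
        {x \<in> space M. n * e \<le> \<bar>(\<Sum>t<n. Y t x) - 0\<bar>}"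
      using False by (auto simp: field_simps)
    also have "prob \<dots> \<le> 2 * exp (- 2 * (n * e)\<^sup>2 / (\<Sum>t<n. (c - - c)\<^sup>2))"
      using False \<open>0 < e\<close> \<open>0 < c\<close> by (intro Hoeffding_ineq_abs_ge) auto
    also have "- 2 * (n * e)\<^sup>2 / (\<Sum>t<n. (c - - c)\<^sup>2) = n * - (e\<^sup>2 / (2 * c\<^sup>2))"
      using False \<open>0 < c\<close> by (simp add: power2_eq_square field_simps)
    also have "exp (n * - (e\<^sup>2 / (2 * c\<^sup>2))) = q ^ n"
      unfolding q_def by (rule exp_of_nat_mult)
    finally show ?thesis .
  qed
  show "summable (\<lambda>n. prob {x \<in> space M. e \<le> \<bar>(\<Sum>t<n. Y t x) / real n\<bar>})"
    by (rule summable_comparison_test'[where g = "\<lambda>n. 2 * q ^ n"])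
      (use tail q in \<open>auto intro: summable_mult summable_geometric\<close>)
qed

section \<open>Random spreading codes\<close>

abbreviation chip_values :: "nat \<Rightarrow> real set" where
  "chip_values N \<equiv> {- 1 / sqrt (real N), 1 / sqrt (real N)}"

abbreviation chip_pmf :: "nat \<Rightarrow> real pmf" where
  "chip_pmf N \<equiv> pmf_of_set (chip_values N)"

lemma prob_space_code_space: "prob_space (code_space N)"
  unfolding code_space_def by (intro prob_space_PiM measure_pmf.prob_space_axioms)

lemma code_space_component: "distr (code_space N) (chip_pmf N) (\<lambda>s. s j) = chip_pmf N"
  unfolding code_space_def
  by (intro product_prob_space.PiM_component product_prob_spaceI measure_pmf.prob_space_axioms) simp

lemma indep_vars_code_space:
  "prob_space.indep_vars (code_space N) (\<lambda>_. chip_pmf N) (\<lambda>j s. s j) UNIV"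
  unfolding code_space_def
  by (intro product_prob_space.indep_vars_PiM_components product_prob_spaceI
      measure_pmf.prob_space_axioms)

lemma AE_code_space_chips:
  "AE s in code_space N. \<forall>j. s j \<in> chip_values N"
proof (subst AE_all_countable, intro allI)
  fix j
  have "AE x in chip_pmf N. x \<in> chip_values N"
    by (rule AE_pmfI) simp
  then show "AE s in code_space N. s j \<in> chip_values N"
    unfolding code_space_def
    by (intro product_prob_space.AE_component product_prob_spaceI measure_pmf.prob_space_axioms) simp_all
qed

lemma
  shows integrable_code_space_component: "integrable (code_space N) (\<lambda>s. s j)"
    and expectation_code_space_component: "integral\<^sup>L (code_space N) (\<lambda>s. s j) = 0"
proof -
  have meas: "(\<lambda>s. s j) \<in> measurable (code_space N) (chip_pmf N)"
    unfolding code_space_def by (rule measurable_component_singleton) simp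
  have "integrable (distr (code_space N) (chip_pmf N) (\<lambda>s. s j)) (\<lambda>x. x)"
    unfolding code_space_component by (rule integrable_measure_pmf_finite) simp
  then show "integrable (code_space N) (\<lambda>s. s j)"
    by (subst (asm) integrable_distr_eq[OF meas]) auto
  have "integral\<^sup>L (code_space N) (\<lambda>s. s j) =
      integral\<^sup>L (distr (code_space N) (chip_pmf N) (\<lambda>s. s j)) (\<lambda>x. x)"
    by (rule integral_distr[symmetric, OF meas]) simp
  also have "\<dots> = 0"
    unfolding code_space_component by (cases "N = 0") (simp_all add: integral_pmf_of_set)
  finally show "integral\<^sup>L (code_space N) (\<lambda>s. s j) = 0" .
qed

lemma
  assumes "j \<noteq> j'"
  shows integrable_code_space_mult: "integrable (code_space N) (\<lambda>s. s j * s j')"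
    and expectation_code_space_mult: "integral\<^sup>L (code_space N) (\<lambda>s. s j * s j') = 0"
proof -
  interpret prob_space "code_space N" by (rule prob_space_code_space)
  have "indep_var (chip_pmf N) (\<lambda>s. s j) (chip_pmf N) (\<lambda>s. s j')"
    using indep_var_of_indep_vars[OF indep_vars_code_space] assms by simp
  then have "indep_var borel ((\<lambda>x. x) \<circ> (\<lambda>s. s j)) borel ((\<lambda>x. x) \<circ> (\<lambda>s. s j'))"
    by (rule indep_var_compose) simp_all
  then have indep: "indep_var borel (\<lambda>s. s j) borel (\<lambda>s. s j')"
    by (simp add: comp_def)
  show "integrable (code_space N) (\<lambda>s. s j * s j')"
    by (rule indep_var_integrable[OF indep integrable_code_space_component integrable_code_space_component])
  show "integral\<^sup>L (code_space N) (\<lambda>s. s j * s j') = 0"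
    by (simp add: indep_var_lebesgue_integral[OF indep integrable_code_space_component
          integrable_code_space_component] expectation_code_space_component)
qed

type_synonym codes = "nat \<times> nat \<times> nat \<times> nat \<Rightarrow> real"

(* code_corr is entry (l, l') of the Gram matrix S_k(t)^T S_k(t) of the codes of user k in
   period t; code_corr_avg is its average over the first M periods. *)
definition code_corr :: "codes \<Rightarrow> nat \<Rightarrow> nat \<Rightarrow> nat \<Rightarrow> nat \<Rightarrow> nat \<Rightarrow> real" where
  "code_corr s N k l l' t = (\<Sum>i<N. s (k, l, t, i) * s (k, l', t, i))"

definition code_corr_avg :: "codes \<Rightarrow> nat \<Rightarrow> nat \<Rightarrow> nat \<Rightarrow> nat \<Rightarrow> nat \<Rightarrow> real" where
  "code_corr_avg s N k l l' M = (\<Sum>t<M. code_corr s N k l l' t) / real M"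

lemma code_corr_self:
  assumes "0 < N" and chips: "\<forall>j. s j \<in> chip_values N"
  shows "code_corr s N k l l t = 1"
proof -
  have "s j * s j = 1 / real N" for j
    using chips[rule_format, of j] \<open>0 < N\<close> by (auto simp: real_sqrt_mult[symmetric])
  then show ?thesis
    using \<open>0 < N\<close> by (simp add: code_corr_def)
qed

lemma abs_code_corr_le_1:
  assumes chips: "\<forall>j. s j \<in> chip_values N"
  shows "\<bar>code_corr s N k l l' t\<bar> \<le> 1"
proof -
  have "\<bar>s j * s j'\<bar> \<le> 1 / real N" for j j'
    using chips[rule_format, of j] chips[rule_format, of j']
    by (auto simp: abs_mult real_sqrt_mult[symmetric])
  then have "(\<Sum>i<N. \<bar>s (k, l, t, i) * s (k, l', t, i)\<bar>) \<le> (\<Sum>i<N. 1 / real N)"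
    by (intro sum_mono)
  then show ?thesis
    unfolding code_corr_def by (intro order_trans[OF sum_abs]) (simp split: if_splits)
qed

lemma indep_vars_code_corr:
  "prob_space.indep_vars (code_space N) (\<lambda>_. borel) (\<lambda>t s. code_corr s N k l l' t) UNIV"
proof -
  interpret prob_space "code_space N" by (rule prob_space_code_space)
  define J :: "nat \<Rightarrow> (nat \<times> nat \<times> nat \<times> nat) set"
    where "J t = {(k, l, t, i) | i. True} \<union> {(k, l', t, i) | i. True}" for t
  have "disjoint_family J"
    by (auto simp: disjoint_family_on_def J_def)
  then have "indep_vars (\<lambda>t. PiM (J t) (\<lambda>_. measure_pmf (chip_pmf N))) (\<lambda>t s. restrict s (J t)) UNIV"
    by (intro indep_vars_restrict[OF indep_vars_code_space]) simp_all
  then have "indep_vars (\<lambda>_. borel) (\<lambda>t s. code_corr (restrict s (J t)) N k l l' t) UNIV"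
  proof (rule indep_vars_compose2)
    have component: "(\<lambda>f. f j) \<in> borel_measurable (PiM (J t) (\<lambda>_. measure_pmf (chip_pmf N)))"
      if "j \<in> J t" for j t
      by (rule measurable_compose[OF measurable_component_singleton[OF that]]) simp
    show "(\<lambda>f. code_corr f N k l l' t) \<in> borel_measurable (PiM (J t) (\<lambda>_. measure_pmf (chip_pmf N)))"
      for t
      unfolding code_corr_def by (intro borel_measurable_sum borel_measurable_times component) (auto simp: J_def)
  qed
  also have "?this \<longleftrightarrow> ?thesis"
    by (intro indep_vars_cong) (auto simp: code_corr_def J_def)
  finally show ?thesis .
qed

lemma expectation_code_corr:
  assumes "l \<noteq> l'"
  shows "integral\<^sup>L (code_space N) (\<lambda>s. code_corr s N k l l' t) = 0"
  unfolding code_corr_def using assms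
  by (subst Bochner_Integration.integral_sum)
    (auto intro: integrable_code_space_mult simp: expectation_code_space_mult)

lemma AE_code_corr_avg_tendsto_zero:
  assumes "l \<noteq> l'"
  shows "AE s in code_space N. code_corr_avg s N k l l' \<longlonglongrightarrow> 0"
  unfolding code_corr_avg_def
proof (rule prob_space.AE_average_tendsto_zero_if_bounded_indep[OF prob_space_code_space])
  show "AE s in code_space N. code_corr s N k l l' t \<in> {- 1..1}" for t
    using AE_code_space_chips
  proof (rule eventually_mono)
    fix s :: codes
    assume "\<forall>j. s j \<in> chip_values N"
    from abs_code_corr_le_1[OF this] show "code_corr s N k l l' t \<in> {- 1..1}"
      by (simp add: abs_le_iff)
  qed
  show "prob_space.indep_vars (code_space N) (\<lambda>_. borel) (\<lambda>t s. code_corr s N k l l' t) UNIV"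
    by (rule indep_vars_code_corr)
  show "integral\<^sup>L (code_space N) (\<lambda>s. code_corr s N k l l' t) = 0" for t
    using assms by (rule expectation_code_corr)
qed simp

section \<open>Symbols and decisions\<close>

lemma expectation_sym_dec_pmf:
  fixes f :: "real \<times> real \<Rightarrow> real"
  assumes "0 \<le> Pe" "Pe \<le> 1"
  shows "measure_pmf.expectation (sym_dec_pmf Pe) f =
    (1 - Pe) / 2 * (f (1, 1) + f (- 1, - 1)) + Pe / 2 * (f (1, - 1) + f (- 1, 1))"
proof -
  have "sym_dec_pmf Pe =
      pmf_of_set {- 1, 1} \<bind> (\<lambda>b. map_pmf (\<lambda>err. (b, if err then - b else b)) (bernoulli_pmf Pe))"
    by (simp add: sym_dec_pmf_def map_pmf_def)
  then show ?thesis
    using assms by (simp add: pmf_expectation_bind_pmf_of_set field_simps)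
qed

lemma finite_user_period_pairs: "finite {(k, t). k < (K :: nat) \<and> t < (M :: nat)}"
  by (rule finite_subset[of _ "{..<K} \<times> {..<M}"]) auto

lemma finite_set_sym_space: "finite (set_pmf (sym_space K M Pe))"
proof -
  have "set_pmf (sym_dec_pmf Pe) \<subseteq> {- 1, 1} \<times> {- 1, 1}"
    by (auto simp: sym_dec_pmf_def split: if_splits)
  then have "finite (set_pmf (sym_dec_pmf Pe))"
    by (rule finite_subset) simp
  then show ?thesis
    unfolding sym_space_def by (simp add: set_Pi_pmf finite_user_period_pairs finite_PiE_dflt)
qed

lemma expectation_sym_space_component:
  fixes g :: "real \<times> real \<Rightarrow> real"
  assumes "k < K" "t < M"
  shows "measure_pmf.expectation (sym_space K M Pe) (\<lambda>bb. g (bb (k, t))) =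
    measure_pmf.expectation (sym_dec_pmf Pe) g"
proof -
  have "measure_pmf.expectation (sym_space K M Pe) (\<lambda>bb. g (bb (k, t))) =
      measure_pmf.expectation (map_pmf (\<lambda>bb. bb (k, t)) (sym_space K M Pe)) g"
    by simp
  also have "map_pmf (\<lambda>bb. bb (k, t)) (sym_space K M Pe) = sym_dec_pmf Pe"
    unfolding sym_space_def using assms by (simp add: Pi_pmf_component finite_user_period_pairs)
  finally show ?thesis .
qed

lemma expectation_decision_times_error:
  assumes "0 \<le> Pe" "Pe \<le> 1" "k < K" "k' < K" "t < M"
  shows "measure_pmf.expectation (sym_space K M Pe)
      (\<lambda>bb. snd (bb (k, t)) * (fst (bb (k', t)) - snd (bb (k', t)))) = (if k' = k then - 2 * Pe else 0)"
proof (cases "k' = k")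
  case True
  then show ?thesis
    using assms expectation_sym_space_component[where g = "\<lambda>(b, b'). b' * (b - b')"]
    by (simp add: case_prod_beta expectation_sym_dec_pmf)
next
  case False
  let ?P = "measure_pmf (sym_space K M Pe)"
  have "prob_space.indep_vars ?P (\<lambda>_. count_space UNIV) (\<lambda>kt bb. bb kt) {(k, t). k < K \<and> t < M}"
    unfolding sym_space_def by (rule indep_vars_Pi_pmf[OF finite_user_period_pairs])
  then have "prob_space.indep_var ?P (count_space UNIV) (\<lambda>bb. bb (k, t)) (count_space UNIV) (\<lambda>bb. bb (k', t))"
    using assms False by (intro prob_space.indep_var_of_indep_vars[OF measure_pmf.prob_space_axioms]) auto
  then have "prob_space.indep_var ?P borel (snd \<circ> (\<lambda>bb. bb (k, t)))
      borel ((\<lambda>(b, b'). b - b') \<circ> (\<lambda>bb. bb (k', t)))"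
    by (rule prob_space.indep_var_compose[OF measure_pmf.prob_space_axioms]) simp_all
  then have "measure_pmf.expectation (sym_space K M Pe)
      (\<lambda>bb. snd (bb (k, t)) * (fst (bb (k', t)) - snd (bb (k', t)))) =
    measure_pmf.expectation (sym_space K M Pe) (\<lambda>bb. snd (bb (k, t))) *
    measure_pmf.expectation (sym_space K M Pe) (\<lambda>bb. fst (bb (k', t)) - snd (bb (k', t)))"
    by (intro prob_space.indep_var_lebesgue_integral[OF measure_pmf.prob_space_axioms])
      (simp_all add: comp_def case_prod_beta integrable_measure_pmf_finite finite_set_sym_space)
  also have "measure_pmf.expectation (sym_space K M Pe) (\<lambda>bb. snd (bb (k, t))) = 0"
    using assms by (simp add: expectation_sym_space_component expectation_sym_dec_pmf)
  finally show ?thesis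
    using False by simp
qed

section \<open>The expected feedback error\<close>

lemma sum_if_fst_eq:
  fixes g :: "'a \<times> 'b \<Rightarrow> 'c::comm_monoid_add"
  assumes "finite A" "finite B" "k \<in> A"
  shows "(\<Sum>c\<in>A \<times> B. if fst c = k then g c else 0) = (\<Sum>l\<in>B. g (k, l))"
proof -
  have "(\<Sum>c\<in>A \<times> B. if fst c = k then g c else 0) =
      (\<Sum>k'\<in>A. if k' = k then \<Sum>l\<in>B. g (k', l) else 0)"
    unfolding sum.cartesian_product' by (intro sum.cong) auto
  also have "\<dots> = (\<Sum>l\<in>B. g (k, l))"
    using assms by (simp add: sum.delta)
  finally show ?thesis .
qed

lemma expectation_delta_af:
  assumes "0 \<le> Pe" "Pe \<le> 1" "k < K"
  shows "measure_pmf.expectation (sym_space K M Pe) (\<lambda>bb. delta_af K N L M s bb a k l) =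
    (\<Sum>l'<L. of_real (2 * Pe * code_corr_avg s N k l l' M) * a k l')"
proof -
  let ?E = "measure_pmf.expectation (sym_space K M Pe)"
  let ?coeff = "\<lambda>r c. of_real (- 2 * Pe * (s (k, l, fst r, snd r) * s (k, c, fst r, snd r))) * a k c"
  have integrable: "integrable (sym_space K M Pe) f" for f :: "_ \<Rightarrow> complex"
    by (rule integrable_measure_pmf_finite[OF finite_set_sym_space])
  have summand: "?E (\<lambda>bb. of_real (Shat_stk s bb r (k, l) * (S_stk s bb r c - Shat_stk s bb r c)) *
      a (fst c) (snd c)) = (if fst c = k then ?coeff r (snd c) else 0)"
    if "r \<in> {..<M} \<times> {..<N}" "c \<in> {..<K} \<times> {..<L}" for r c
  proof -
    obtain t i k' l' where rc: "r = (t, i)" "c = (k', l')"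
      by fastforce
    let ?G = "\<lambda>bb. Shat_stk s bb r (k, l) * (S_stk s bb r c - Shat_stk s bb r c)"
    have "?G = (\<lambda>bb. s (k, l, t, i) * s (k', l', t, i) * (snd (bb (k, t)) * (fst (bb (k', t)) - snd (bb (k', t)))))"
      by (simp add: rc S_stk_def Shat_stk_def fun_eq_iff algebra_simps)
    then have expectation_G: "?E ?G = (if k' = k then - 2 * Pe * (s (k, l, t, i) * s (k, l', t, i)) else 0)"
      using that assms by (simp add: rc expectation_decision_times_error)
    have "?E (\<lambda>bb. of_real (?G bb) * a (fst c) (snd c)) = of_real (?E ?G) * a (fst c) (snd c)"
      by (simp only: integral_mult_left_zero integral_complex_of_real)
    also have "\<dots> = (if fst c = k then ?coeff r (snd c) else 0)"
      by (simp only: expectation_G) (simp add: rc)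
    finally show ?thesis .
  qed
  have "?E (\<lambda>bb. delta_af K N L M s bb a k l) =
      - (1 / of_nat M) * (\<Sum>r\<in>{..<M} \<times> {..<N}. \<Sum>c\<in>{..<K} \<times> {..<L}.
        ?E (\<lambda>bb. of_real (Shat_stk s bb r (k, l) * (S_stk s bb r c - Shat_stk s bb r c)) * a (fst c) (snd c)))"
    unfolding delta_af_def
    by (simp only: integral_mult_right_zero Bochner_Integration.integral_sum integrable)
  also have "\<dots> = - (1 / of_nat M) * (\<Sum>r\<in>{..<M} \<times> {..<N}. \<Sum>c\<in>{..<K} \<times> {..<L}.
      if fst c = k then ?coeff r (snd c) else 0)"
    by (intro arg_cong2[where f = "(*)"] refl sum.cong summand)
  also have "\<dots> = - (1 / of_nat M) * (\<Sum>t<M. \<Sum>i<N. \<Sum>l'<L. ?coeff (t, i) l')"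
    by (simp only: sum_if_fst_eq finite_lessThan lessThan_iff assms(3)
        sum.cartesian_product'[of _ "{..<M}"] fst_conv snd_conv)
  also have "\<dots> = (\<Sum>l'<L. of_real (2 * Pe * code_corr_avg s N k l l' M) * a k l')"
    by (simp add: sum.swap[of _ "{..<L}"] sum_distrib_left sum_distrib_right code_corr_avg_def
        code_corr_def sum_divide_distrib algebra_simps)
  finally show ?thesis .
qed

lemma code_corr_avg_tendsto:
  assumes "0 < N" and chips: "\<forall>j. s j \<in> chip_values N"
    and off_diagonal: "\<forall>l'. l' \<noteq> l \<longrightarrow> code_corr_avg s N k l l' \<longlonglongrightarrow> 0"
  shows "code_corr_avg s N k l l' \<longlonglongrightarrow> (if l' = l then 1 else 0)"
proof (cases "l' = l")
  case True
  have "(\<lambda>M. code_corr_avg s N k l l (Suc M)) \<longlonglongrightarrow> 1"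
    by (simp add: code_corr_avg_def code_corr_self[OF \<open>0 < N\<close> chips])
  then show ?thesis
    using True by (simp add: LIMSEQ_imp_Suc)
qed (use off_diagonal in simp)

lemma tendsto_sum_code_corr_avg:
  fixes a :: "nat \<Rightarrow> nat \<Rightarrow> complex"
  assumes "0 < N" and chips: "\<forall>j. s j \<in> chip_values N"
    and off_diagonal: "\<forall>l'. l' \<noteq> l \<longrightarrow> code_corr_avg s N k l l' \<longlonglongrightarrow> 0"
    and "l < L"
  shows "(\<lambda>M. \<Sum>l'<L. of_real (c * code_corr_avg s N k l l' M) * a k l')
    \<longlonglongrightarrow> of_real c * a k l"
proof -
  have "(\<lambda>M. \<Sum>l'<L. of_real (c * code_corr_avg s N k l l' M) * a k l')
      \<longlonglongrightarrow> (\<Sum>l'<L. of_real (c * (if l' = l then 1 else 0)) * a k l')"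
    by (intro tendsto_intros code_corr_avg_tendsto[OF assms(1-3)])
  also have "(\<Sum>l'<L. of_real (c * (if l' = l then 1 else 0)) * a k l') =
      (\<Sum>l'<L. if l' = l then of_real c * a k l else 0)"
    by (intro sum.cong) auto
  also have "\<dots> = of_real c * a k l"
    using \<open>l < L\<close> by simp
  finally show ?thesis .
qed

theorem mainTheorem2:
  fixes K N L :: nat and Pe :: real and a :: "nat \<Rightarrow> nat \<Rightarrow> complex"
  assumes "0 < K" and "0 < N" and "0 < L" and "0 \<le> Pe" and "Pe \<le> 1"
  shows "AE s in code_space N. \<forall>k<K. \<forall>l<L.
           (\<lambda>M. measure_pmf.expectation (sym_space K M Pe) (\<lambda>bb. delta_af K N L M s bb a k l))
             \<longlonglongrightarrow> of_real (2 * Pe) * a k l"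
proof -
  have "AE s in code_space N. \<forall>k l l'. l' \<noteq> l \<longrightarrow>
      code_corr_avg s N k l l' \<longlonglongrightarrow> 0"
    by (intro AE_all_countable[THEN iffD2] allI AE_impI AE_code_corr_avg_tendsto_zero) simp
  with AE_code_space_chips show ?thesis
  proof eventually_elim
    case (elim s)
    show ?case
    proof (intro allI impI)
      fix k l assume "k < K" "l < L"
      have "\<forall>l'. l' \<noteq> l \<longrightarrow> code_corr_avg s N k l l' \<longlonglongrightarrow> 0"
        using elim(2) by blast
      then show "(\<lambda>M. measure_pmf.expectation (sym_space K M Pe) (\<lambda>bb. delta_af K N L M s bb a k l))
          \<longlonglongrightarrow> of_real (2 * Pe) * a k l"
        unfolding expectation_delta_af[OF assms(4,5) \<open>k < K\<close>]
        by (rule tendsto_sum_code_corr_avg[OF \<open>0 < N\<close> elim(1) _ \<open>l < L\<close>])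
    qed
  qed
qed

end
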